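(* Let $N$ be a probabilistic algorithmic knowledge structure, $i$ an agent, and $\phi$ a formula containing no occurrence of any $X_j$ operator. If $\mathtt{A}_i$ is $\phi$-complete and $(\alpha,\beta)$-reliable for $\phi$ in $N$, then (a) $N\models X_i\phi\wedge\neg K_i\neg\phi\Rightarrow\underline{\mathrm{Ev}}_i(\phi)\ge\frac{\alpha}{\alpha+\beta}$ if $(\alpha,\beta)\ne(0,0)$; (b) $N\models X_i\phi\wedge\neg K_i\neg\phi\Rightarrow\underline{\mathrm{Ev}}_i(\phi)=1$ if $(\alpha,\beta)=(0,0)$; (c) $N\models\neg X_i\phi\wedge\neg K_i\phi\Rightarrow\overline{\mathrm{Ev}}_i(\phi)\le\frac{1-\alpha}{2-(\alpha+\beta)}$ if $(\alpha,\beta)\ne(1,1)$; (d) $N\models\neg X_i\phi\wedge\neg K_i\phi\Rightarrow\overline{\mathrm{Ev}}_i(\phi)=0$ if $(\alpha,\beta)=(1,1)$.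
   Context: A derandomizer is $v=(v_1,\dots,v_n)$ with each $v_i$ a sequence of coin-toss outcomes; $V$ is the set of derandomizers. A probabilistic algorithmic knowledge structure is $N=(S,\pi,L_1,\dots,L_n,\mathtt{A}^d_1,\dots,\mathtt{A}^d_n,\nu)$ with states $S$, truth assignments $\pi(s)$ to primitive propositions, local-state functions $L_i:S\to\mathcal{L}$, deterministic functions $\mathtt{A}^d_i(\phi,\ell,s,v_i)\in\{$"Yes","No","?"$\}$ (the derandomized version of agent $i$'s knowledge algorithm $\mathtt{A}_i$), and a probability distribution $\nu$ on $V$ such that for all $i,\phi,s$ and each answer $a$, $\{v:\mathtt{A}^d_i(\phi,L_i(s),s,v_i)=a\}$ is nonempty iff it has positive $\nu$-probability. Semantics at pairs $(s,v)$: primitive propositions via $\pi$, $\neg,\wedge,\Rightarrow$ usual, $(N,s,v)\models K_i\phi$ iff $(N,t,v')\models\phi$ for all $v'\in V$ and all $t$ with $L_i(t)=L_i(s)$, $(N,s,v)\models X_i\phi$ iff $\mathtt{A}^d_i(\phi,L_i(s),s,v_i)=$"Yes", $(N,s,v)\models\Pr(\phi)\ge\alpha$ iff $\nu(\{v':(N,s,v')\models\phi\})\ge\alpha$; $N\models\psi$ means $(N,s,v)\models\psi$ for all $s,v$. For $\phi$ with no $X_j$, write $(N,s)\models\phi$ (independent of $v$). For local state $\ell$ of agent $i$: $S_\ell=\{s:L_i(s)=\ell\}$, $S_{\ell,\phi}=\{s\in S_\ell:(N,s)\models\phi\}$, $S_{\ell,\neg\phi}=\{s\in S_\ell:(N,s)\models\neg\phi\}$;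 $\mu_{s,\phi}(\mathit{ob})=\nu(\{v':\mathtt{A}^d_i(\phi,L_i(s),s,v'_i)=\mathit{ob}\})$; $\mathcal{F}_{\ell,\phi}(\phi)=\{\mu_{s,\phi}:s\in S_{\ell,\phi}\}$, $\mathcal{F}_{\ell,\phi}(\neg\phi)=\{\mu_{s,\phi}:s\in S_{\ell,\neg\phi}\}$; evidence space $\mathcal{E}_{\mathtt{A}_i,\phi,\ell}=(\{\phi,\neg\phi\},\{$"Yes","No","?"$\},\mathcal{F}_{\ell,\phi})$. For $\mathcal{E}=(\mathcal{H},\mathcal{O},\mathcal{F})$, $\mathcal{W}_{\mathcal{E}}(\mathit{ob},h)$ is the set of values $\mu_h(\mathit{ob})/\sum_{h'\in\mathcal{H},\mathcal{F}(h')\ne\emptyset}\mu_{h'}(\mathit{ob})$ over all choices $\mu_{h'}\in\mathcal{F}(h')$ (one per $h'$ with $\mathcal{F}(h')\ne\emptyset$) with nonzero denominator; $\underline{w}_{\mathcal{E}}=\inf\mathcal{W}_{\mathcal{E}}$, $\overline{w}_{\mathcal{E}}=\sup\mathcal{W}_{\mathcal{E}}$, both $0$ if the set is empty. $(N,s,v)\models\underline{\mathrm{Ev}}_i(\phi)\ge\alpha$ iff $\underline{w}_{\mathcal{E}_{\mathtt{A}_i,\phi,L_i(s)}}(\mathtt{A}^d_i(\phi,L_i(s),s,v_i),\phi)\ge\alpha$, and similarly for $\le,=$ and for $\overline{\mathrm{Ev}}_i$ with $\overline{w}$. $\mathtt{A}_i$ is $\phi$-complete in $N$ if $\mathtt{A}^d_i(\phi,L_i(s),s,v_i)\in\{$"Yes","No"$\}$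 for all $s,v$. For $\alpha,\beta\in[0,1]$, $\mathtt{A}_i$ is $(\alpha,\beta)$-reliable for $\phi$ in $N$ if for all $s,v$: $(N,s,v)\models\phi$ implies $\mu_{s,\phi}($"Yes"$)\ge\alpha$, and $(N,s,v)\models\neg\phi$ implies $\mu_{s,\phi}($"Yes"$)\le\beta$. *)

theory Defs
  imports "HOL-Probability.Probability"
begin

datatype answer = Yes | No | Unk

datatype ('p, 'ag) fml =
    Prim 'p
  | Neg "('p, 'ag) fml"
  | Conj "('p, 'ag) fml" "('p, 'ag) fml"
  | Imp "('p, 'ag) fml" "('p, 'ag) fml"
  | Kn 'ag "('p, 'ag) fml"
  | Xa 'ag "('p, 'ag) fml"
  | PrGe "('p, 'ag) fml" real

fun noX :: "('p, 'ag) fml \<Rightarrow> bool" where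
  "noX (Prim p) = True"
| "noX (Neg f) = noX f"
| "noX (Conj f g) = (noX f \<and> noX g)"
| "noX (Imp f g) = (noX f \<and> noX g)"
| "noX (Kn i f) = noX f"
| "noX (Xa i f) = False"
| "noX (PrGe f a) = noX f"

text \<open>States are the elements of
  type 's, local states of type 'l, a derandomizer is a function 'ag => 'c assigning
  to every agent its sequence of coin tosses (of type 'c); V is the set of all of them.
  The algorithm field is the derandomized algorithm A^d_i(phi, l, s, v_i).\<close>
record ('s, 'p, 'ag, 'l, 'c) pak =
  truth :: "'s \<Rightarrow> 'p \<Rightarrow> bool"
  loc :: "'ag \<Rightarrow> 's \<Rightarrow> 'l"
  alg :: "'ag \<Rightarrow> ('p, 'ag) fml \<Rightarrow> 'l \<Rightarrow> 's \<Rightarrow> 'c \<Rightarrow> answer"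
  nu :: "('ag \<Rightarrow> 'c) measure"

definition answer_set ::
  "('s, 'p, 'ag, 'l, 'c) pak \<Rightarrow> 'ag \<Rightarrow> ('p, 'ag) fml \<Rightarrow> 's \<Rightarrow> answer \<Rightarrow> ('ag \<Rightarrow> 'c) set" where
  "answer_set N i f s a = {v. alg N i f (loc N i s) s (v i) = a}"

definition wf_pak :: "('s, 'p, 'ag, 'l, 'c) pak \<Rightarrow> bool" where
  "wf_pak N \<longleftrightarrow> prob_space (nu N) \<and> space (nu N) = UNIV \<and>
     (\<forall>i f s a. answer_set N i f s a \<in> sets (nu N) \<and>
        (answer_set N i f s a \<noteq> {} \<longleftrightarrow> measure (nu N) (answer_set N i f s a) > 0))"

fun sat :: "('s, 'p, 'ag, 'l, 'c) pak \<Rightarrow> 's \<Rightarrow> ('ag \<Rightarrow> 'c) \<Rightarrow> ('p, 'ag) fml \<Rightarrow> bool" where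
  "sat N s v (Prim p) = truth N s p"
| "sat N s v (Neg f) = (\<not> sat N s v f)"
| "sat N s v (Conj f g) = (sat N s v f \<and> sat N s v g)"
| "sat N s v (Imp f g) = (sat N s v f \<longrightarrow> sat N s v g)"
| "sat N s v (Kn i f) = (\<forall>t v'. loc N i t = loc N i s \<longrightarrow> sat N t v' f)"
| "sat N s v (Xa i f) = (alg N i f (loc N i s) s (v i) = Yes)"
| "sat N s v (PrGe f a) = (measure (nu N) {v'. sat N s v' f} \<ge> a)"

definition valid :: "('s, 'p, 'ag, 'l, 'c) pak \<Rightarrow> ('p, 'ag) fml \<Rightarrow> bool" where
  "valid N f \<longleftrightarrow> (\<forall>s v. sat N s v f)"

definition mu :: "('s, 'p, 'ag, 'l, 'c) pak \<Rightarrow> 'ag \<Rightarrow> ('p, 'ag) fml \<Rightarrow> 's \<Rightarrow> answer \<Rightarrow> real" where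
  "mu N i f s ob = measure (nu N) (answer_set N i f s ob)"

text \<open>Evidence spaces with hypothesis type 'h (finite) and observations 'o;
  the family F maps each hypothesis to a set of distributions on observations.\<close>
definition Wset :: "('h::finite \<Rightarrow> ('o \<Rightarrow> real) set) \<Rightarrow> 'o \<Rightarrow> 'h \<Rightarrow> real set" where
  "Wset F ob h = {g h ob / (\<Sum>h'\<in>{h'. F h' \<noteq> {}}. g h' ob) | g.
       F h \<noteq> {} \<and> (\<forall>h'. F h' \<noteq> {} \<longrightarrow> g h' \<in> F h') \<and> (\<Sum>h'\<in>{h'. F h' \<noteq> {}}. g h' ob) \<noteq> 0}"

definition w_lower :: "('h::finite \<Rightarrow> ('o \<Rightarrow> real) set) \<Rightarrow> 'o \<Rightarrow> 'h \<Rightarrow> real" where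
  "w_lower F ob h = (if Wset F ob h = {} then 0 else Inf (Wset F ob h))"

definition w_upper :: "('h::finite \<Rightarrow> ('o \<Rightarrow> real) set) \<Rightarrow> 'o \<Rightarrow> 'h \<Rightarrow> real" where
  "w_upper F ob h = (if Wset F ob h = {} then 0 else Sup (Wset F ob h))"

text \<open>F_{l,phi}: hypothesis True stands for phi, False for not phi.
  (N,s) |= phi for X-free phi is rendered as: phi holds at (s,v) for all v.\<close>
definition Fam :: "('s, 'p, 'ag, 'l, 'c) pak \<Rightarrow> 'ag \<Rightarrow> ('p, 'ag) fml \<Rightarrow> 'l \<Rightarrow> bool \<Rightarrow> (answer \<Rightarrow> real) set" where
  "Fam N i f l h =
     (if h then {mu N i f s | s. loc N i s = l \<and> (\<forall>v. sat N s v f)}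
      else {mu N i f s | s. loc N i s = l \<and> (\<forall>v. sat N s v (Neg f))})"

definition Ev_lower :: "('s, 'p, 'ag, 'l, 'c) pak \<Rightarrow> 'ag \<Rightarrow> ('p, 'ag) fml \<Rightarrow> 's \<Rightarrow> ('ag \<Rightarrow> 'c) \<Rightarrow> real" where
  "Ev_lower N i f s v = w_lower (Fam N i f (loc N i s)) (alg N i f (loc N i s) s (v i)) True"

definition Ev_upper :: "('s, 'p, 'ag, 'l, 'c) pak \<Rightarrow> 'ag \<Rightarrow> ('p, 'ag) fml \<Rightarrow> 's \<Rightarrow> ('ag \<Rightarrow> 'c) \<Rightarrow> real" where
  "Ev_upper N i f s v = w_upper (Fam N i f (loc N i s)) (alg N i f (loc N i s) s (v i)) True"

definition complete_for :: "('s, 'p, 'ag, 'l, 'c) pak \<Rightarrow> 'ag \<Rightarrow> ('p, 'ag) fml \<Rightarrow> bool" where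
  "complete_for N i f \<longleftrightarrow> (\<forall>s v. alg N i f (loc N i s) s (v i) \<in> {Yes, No})"

definition reliable_for :: "('s, 'p, 'ag, 'l, 'c) pak \<Rightarrow> 'ag \<Rightarrow> real \<Rightarrow> real \<Rightarrow> ('p, 'ag) fml \<Rightarrow> bool" where
  "reliable_for N i a b f \<longleftrightarrow>
     (\<forall>s v. (sat N s v f \<longrightarrow> mu N i f s Yes \<ge> a) \<and> (sat N s v (Neg f) \<longrightarrow> mu N i f s Yes \<le> b))"

end

theory Submission
  imports Defs
begin

text \<open>With only the two hypotheses \<phi> and \<not>\<phi>, a weight of evidence for \<phi> after observation ob
  is a ob / (a ob + b ob) for a distribution a from a \<phi>-state and b from a \<not>\<phi>-state
  (or 1 if there is no \<not>\<phi>-state). Reliability gives a Yes \<ge> \<alpha> and b Yes \<le> \<beta>, and completeness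
  turns this into a No \<le> 1 - \<alpha> and b No \<ge> 1 - \<beta>. Since x / (x + y) is increasing in x and
  decreasing in y, every weight lies on the right side of the bound; the hypotheses on K_i make
  the relevant families nonempty, and the observed answer has positive probability.\<close>

lemma divide_add_mono:
  fixes a b a' b' :: real
  assumes "0 \<le> a" "a \<le> a'" "0 \<le> b'" "b' \<le> b"
  shows "a / (a + b) \<le> a' / (a' + b')"
proof (cases "a = 0")
  case True
  then show ?thesis using assms by simp
next
  case False
  then have "0 < a + b" "0 < a' + b'" using assms by linarith+
  moreover have "a * b' \<le> a' * b" using assms by (meson mult_mono order_trans)
  ultimately show ?thesis by (simp add: field_simps)
qed

lemma Wset_empty: "F h = {} \<Longrightarrow> Wset F ob h = {}"
  unfolding Wset_def by blast

lemma Wset_True_if_False_empty: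
  assumes "F False = {}"
  shows "Wset F ob True = (if \<exists>a\<in>F True. a ob \<noteq> 0 then {1} else {})"
proof (cases "F True = {}")
  case True
  then show ?thesis by (simp add: Wset_empty)
next
  case False
  have nonempty_iff: "F h \<noteq> {} \<longleftrightarrow> h" for h
    using assms False by (cases h) simp_all
  then have support: "{h. F h \<noteq> {}} = {True}" by auto
  have "x \<in> Wset F ob True \<longleftrightarrow> x = 1 \<and> (\<exists>a\<in>F True. a ob \<noteq> 0)" for x
  proof
    assume "x \<in> Wset F ob True"
    then obtain g where "g True \<in> F True" "g True ob \<noteq> 0" "x = g True ob / g True ob"
      unfolding Wset_def support by auto (use False in blast)
    then show "x = 1 \<and> (\<exists>a\<in>F True. a ob \<noteq> 0)" by auto
  next
    assume "x = 1 \<and> (\<exists>a\<in>F True. a ob \<noteq> 0)"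
    then obtain a where "a \<in> F True" "a ob \<noteq> 0" "x = a ob / a ob" by auto
    then show "x \<in> Wset F ob True"
      unfolding Wset_def support using nonempty_iff by (intro CollectI exI[of _ "\<lambda>_. a"]) auto
  qed
  then show ?thesis by auto
qed

lemma Wset_True_if_False_nonempty:
  assumes "F False \<noteq> {}"
  shows "Wset F ob True =
    {a ob / (a ob + b ob) | a b. a \<in> F True \<and> b \<in> F False \<and> a ob + b ob \<noteq> 0}"
proof (cases "F True = {}")
  case True
  then show ?thesis by (simp add: Wset_empty)
next
  case False
  have "F h \<noteq> {}" for h
    using assms False by (cases h) simp_all
  then have support: "{h. F h \<noteq> {}} = UNIV" by auto
  have sum_bool: "(\<Sum>h\<in>UNIV. g h ob) = g True ob + g False ob" for g :: "bool \<Rightarrow> 'a \<Rightarrow> real"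
    by (simp add: UNIV_bool add.commute)
  have "x \<in> Wset F ob True \<longleftrightarrow>
      (\<exists>a b. x = a ob / (a ob + b ob) \<and> a \<in> F True \<and> b \<in> F False \<and> a ob + b ob \<noteq> 0)" for x
  proof
    assume "x \<in> Wset F ob True"
    then obtain g where "g True \<in> F True" "g False \<in> F False" "g True ob + g False ob \<noteq> 0"
        "x = g True ob / (g True ob + g False ob)"
      unfolding Wset_def support sum_bool using assms False by auto
    then show "\<exists>a b. x = a ob / (a ob + b ob) \<and> a \<in> F True \<and> b \<in> F False \<and> a ob + b ob \<noteq> 0"
      by blast
  next
    assume "\<exists>a b. x = a ob / (a ob + b ob) \<and> a \<in> F True \<and> b \<in> F False \<and> a ob + b ob \<noteq> 0"
    then obtain a b where ab: "a \<in> F True" "b \<in> F False" "a ob + b ob \<noteq> 0"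
        "x = a ob / (a ob + b ob)" by blast
    then show "x \<in> Wset F ob True"
      unfolding Wset_def support sum_bool
      by (intro CollectI exI[of _ "\<lambda>h. if h then a else b"]) auto
  qed
  then show ?thesis by blast
qed

lemma Wset_True_nonempty:
  assumes "F True \<noteq> {}" and "\<And>h a. a \<in> F h \<Longrightarrow> 0 \<le> a ob"
    and "b \<in> F h" and "0 < b ob"
  shows "Wset F ob True \<noteq> {}"
proof (cases "F False = {}")
  case True
  then have "b \<in> F True" using assms(3) by (cases h) auto
  then have "\<exists>a\<in>F True. a ob \<noteq> 0" using assms(4) by (intro bexI[of _ b]) simp_all
  then show ?thesis using True by (simp add: Wset_True_if_False_empty)
next
  case False
  obtain a c where a: "a \<in> F True" and c: "c \<in> F False" using assms(1) False by blast
  have "a ob + b ob \<noteq> 0" "b ob + c ob \<noteq> 0"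
    using assms(2)[OF a] assms(2)[OF c] assms(4) by linarith+
  then show ?thesis
    using a c assms(3) by (cases h) (auto simp: Wset_True_if_False_nonempty[of F] False)
qed

lemma Wset_True_ge:
  assumes "x \<in> Wset F ob True" and "0 \<le> c" "0 \<le> d"
    and "\<And>a. a \<in> F True \<Longrightarrow> c \<le> a ob"
    and "\<And>b. b \<in> F False \<Longrightarrow> 0 \<le> b ob \<and> b ob \<le> d"
  shows "c / (c + d) \<le> x"
proof (cases "F False = {}")
  case True
  then have "x = 1" using assms(1) by (simp add: Wset_True_if_False_empty split: if_splits)
  moreover have "c / (c + d) \<le> 1" using assms(2,3) by (cases "c + d = 0") (simp_all add: divide_le_eq_1)
  ultimately show ?thesis by simp
next
  case False
  then obtain a b where "a \<in> F True" "b \<in> F False" "x = a ob / (a ob + b ob)"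
    using assms(1) by (auto simp: Wset_True_if_False_nonempty)
  then show ?thesis using assms(2-5) by (simp add: divide_add_mono)
qed

lemma Wset_True_eq_1:
  assumes "x \<in> Wset F ob True" and "\<And>b. b \<in> F False \<Longrightarrow> b ob = 0"
  shows "x = 1"
proof (cases "F False = {}")
  case True
  then show ?thesis using assms(1) by (simp add: Wset_True_if_False_empty split: if_splits)
next
  case False
  then show ?thesis using assms by (auto simp: Wset_True_if_False_nonempty)
qed

lemma Wset_True_le:
  assumes "x \<in> Wset F ob True" and "F False \<noteq> {}" and "0 \<le> d"
    and "\<And>a. a \<in> F True \<Longrightarrow> 0 \<le> a ob \<and> a ob \<le> c"
    and "\<And>b. b \<in> F False \<Longrightarrow> d \<le> b ob"
  shows "x \<le> c / (c + d)"
proof -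
  obtain a b where "a \<in> F True" "b \<in> F False" "x = a ob / (a ob + b ob)"
    using assms(1,2) by (auto simp: Wset_True_if_False_nonempty)
  then show ?thesis using assms(3-5) by (simp add: divide_add_mono)
qed

lemma Wset_True_eq_0:
  assumes "x \<in> Wset F ob True" and "\<And>a. a \<in> F True \<Longrightarrow> a ob = 0"
  shows "x = 0"
proof (cases "F False = {}")
  case True
  then show ?thesis using assms by (auto simp: Wset_True_if_False_empty split: if_splits)
next
  case False
  then show ?thesis using assms by (auto simp: Wset_True_if_False_nonempty)
qed

lemma w_lower_ge:
  assumes "Wset F ob h \<noteq> {}" and "\<And>x. x \<in> Wset F ob h \<Longrightarrow> c \<le> x"
  shows "c \<le> w_lower F ob h"
  using assms unfolding w_lower_def by (simp add: cInf_greatest)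

lemma w_lower_eq:
  assumes "Wset F ob h \<noteq> {}" and "\<And>x. x \<in> Wset F ob h \<Longrightarrow> x = c"
  shows "w_lower F ob h = c"
proof -
  have "Wset F ob h = {c}" using assms by blast
  then show ?thesis by (simp add: w_lower_def)
qed

lemma w_upper_le:
  assumes "0 \<le> c" and "\<And>x. x \<in> Wset F ob h \<Longrightarrow> x \<le> c"
  shows "w_upper F ob h \<le> c"
  using assms unfolding w_upper_def by (simp add: cSup_least)

lemma w_upper_eq_0:
  assumes "\<And>x. x \<in> Wset F ob h \<Longrightarrow> x = 0"
  shows "w_upper F ob h = 0"
proof (cases "Wset F ob h = {}")
  case False
  then have "Wset F ob h = {0}" using assms by blast
  then show ?thesis by (simp add: w_upper_def)
qed (simp add: w_upper_def)

lemma sat_noX_indep: "noX f \<Longrightarrow> sat N s v f = sat N s v' f"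
  by (induction f) auto

lemma Fam_eq: "Fam N i f l h = {mu N i f s | s. loc N i s = l \<and> (\<forall>v. sat N s v f = h)}"
  unfolding Fam_def by (cases h) auto

lemma mu_in_Fam: "noX f \<Longrightarrow> mu N i f s \<in> Fam N i f (loc N i s) (sat N s v f)"
  unfolding Fam_eq using sat_noX_indep[of f N s _ v] by (intro CollectI exI[of _ s]) simp

lemma FamE:
  assumes "a \<in> Fam N i f l h"
  obtains s where "a = mu N i f s" "loc N i s = l" "\<And>v. sat N s v f = h"
  using assms unfolding Fam_eq by blast

lemma Fam_nonneg: "a \<in> Fam N i f l h \<Longrightarrow> 0 \<le> a ob"
  by (erule FamE) (simp add: mu_def)

lemma mu_answer_pos:
  assumes "wf_pak N" and "alg N i f (loc N i s) s (v i) = ob"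
  shows "0 < mu N i f s ob"
proof -
  have "v \<in> answer_set N i f s ob" using assms(2) by (simp add: answer_set_def)
  then show ?thesis using assms(1) unfolding wf_pak_def mu_def by blast
qed

lemma mu_No_eq:
  assumes "wf_pak N" and "complete_for N i f"
  shows "mu N i f s No = 1 - mu N i f s Yes"
proof -
  interpret prob_space "nu N" using assms(1) by (simp add: wf_pak_def)
  have "answer_set N i f s No = space (nu N) - answer_set N i f s Yes"
    using assms unfolding wf_pak_def complete_for_def answer_set_def by auto
  moreover have "answer_set N i f s Yes \<in> events" using assms(1) by (simp add: wf_pak_def)
  ultimately show ?thesis by (simp add: mu_def prob_compl)
qed

lemma Fam_No_eq:
  "wf_pak N \<Longrightarrow> complete_for N i f \<Longrightarrow> a \<in> Fam N i f l h \<Longrightarrow> a No = 1 - a Yes"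
  by (erule FamE) (simp add: mu_No_eq)

lemma Fam_True_Yes_ge: "reliable_for N i \<alpha> \<beta> f \<Longrightarrow> a \<in> Fam N i f l True \<Longrightarrow> \<alpha> \<le> a Yes"
  by (erule FamE) (simp add: reliable_for_def)

lemma Fam_False_Yes_le: "reliable_for N i \<alpha> \<beta> f \<Longrightarrow> a \<in> Fam N i f l False \<Longrightarrow> a Yes \<le> \<beta>"
  by (erule FamE) (simp add: reliable_for_def)

lemma Wset_Fam_Yes_nonempty:
  assumes "wf_pak N" and "noX f" and "sat N s v (Conj (Xa i f) (Neg (Kn i (Neg f))))"
  shows "Wset (Fam N i f (loc N i s)) Yes True \<noteq> {}"
proof (rule Wset_True_nonempty)
  obtain t v' where "loc N i t = loc N i s" "sat N t v' f" using assms(3) by auto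
  then show "Fam N i f (loc N i s) True \<noteq> {}" using mu_in_Fam[OF assms(2), of N i t v'] by auto
  show "mu N i f s \<in> Fam N i f (loc N i s) (sat N s v f)" using assms(2) by (rule mu_in_Fam)
  show "0 < mu N i f s Yes" using assms(3) by (intro mu_answer_pos[OF assms(1), where v = v]) simp
qed (rule Fam_nonneg)

lemma Ev_lower_ge_ratio:
  assumes "wf_pak N" and "noX f" and "reliable_for N i \<alpha> \<beta> f" and "0 \<le> \<alpha>" "0 \<le> \<beta>"
    and "sat N s v (Conj (Xa i f) (Neg (Kn i (Neg f))))"
  shows "\<alpha> / (\<alpha> + \<beta>) \<le> Ev_lower N i f s v"
proof -
  have "\<alpha> / (\<alpha> + \<beta>) \<le> x" if "x \<in> Wset (Fam N i f (loc N i s)) Yes True" for x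
    using that assms(4,5)
  proof (rule Wset_True_ge)
    show "\<alpha> \<le> a Yes" if "a \<in> Fam N i f (loc N i s) True" for a
      using that by (rule Fam_True_Yes_ge[OF assms(3)])
    show "0 \<le> b Yes \<and> b Yes \<le> \<beta>" if "b \<in> Fam N i f (loc N i s) False" for b
      using Fam_nonneg[OF that] Fam_False_Yes_le[OF assms(3) that] by simp
  qed
  then show ?thesis
    using assms(6) w_lower_ge[OF Wset_Fam_Yes_nonempty[OF assms(1,2,6)]] by (simp add: Ev_lower_def)
qed

lemma Ev_lower_eq_1:
  assumes "wf_pak N" and "noX f" and "reliable_for N i \<alpha> 0 f"
    and "sat N s v (Conj (Xa i f) (Neg (Kn i (Neg f))))"
  shows "Ev_lower N i f s v = 1"
proof -
  have "x = 1" if "x \<in> Wset (Fam N i f (loc N i s)) Yes True" for x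
    using that
  proof (rule Wset_True_eq_1)
    show "b Yes = 0" if "b \<in> Fam N i f (loc N i s) False" for b
      using Fam_nonneg[OF that, of Yes] Fam_False_Yes_le[OF assms(3) that] by simp
  qed
  then show ?thesis
    using assms(4) w_lower_eq[OF Wset_Fam_Yes_nonempty[OF assms(1,2,4)]] by (simp add: Ev_lower_def)
qed

lemma complete_answer_No:
  "complete_for N i f \<Longrightarrow> sat N s v (Neg (Xa i f)) \<Longrightarrow> alg N i f (loc N i s) s (v i) = No"
  unfolding complete_for_def by auto

lemma Ev_upper_le_ratio:
  assumes "wf_pak N" and "noX f" and "complete_for N i f" and "reliable_for N i \<alpha> \<beta> f"
    and "\<alpha> \<le> 1" "\<beta> \<le> 1"
    and "sat N s v (Conj (Neg (Xa i f)) (Neg (Kn i f)))"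
  shows "Ev_upper N i f s v \<le> (1 - \<alpha>) / (2 - (\<alpha> + \<beta>))"
proof -
  let ?F = "Fam N i f (loc N i s)"
  obtain t v' where "loc N i t = loc N i s" "\<not> sat N t v' f" using assms(7) by auto
  then have False_nonempty: "?F False \<noteq> {}" using mu_in_Fam[OF assms(2), of N i t v'] by auto
  have ratio: "x \<le> (1 - \<alpha>) / ((1 - \<alpha>) + (1 - \<beta>))" if "x \<in> Wset ?F No True" for x
    using that False_nonempty
  proof (rule Wset_True_le)
    show "0 \<le> 1 - \<beta>" using assms(6) by simp
    show "0 \<le> a No \<and> a No \<le> 1 - \<alpha>" if "a \<in> ?F True" for a
      using Fam_nonneg[OF that, of No] Fam_No_eq[OF assms(1,3) that] Fam_True_Yes_ge[OF assms(4) that]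
      by simp
    show "1 - \<beta> \<le> b No" if "b \<in> ?F False" for b
      using Fam_No_eq[OF assms(1,3) that] Fam_False_Yes_le[OF assms(4) that] by simp
  qed
  have "(1 - \<alpha>) + (1 - \<beta>) = 2 - (\<alpha> + \<beta>)" by simp
  with ratio have bound: "x \<le> (1 - \<alpha>) / (2 - (\<alpha> + \<beta>))" if "x \<in> Wset ?F No True" for x
    using that by simp
  have "0 \<le> (1 - \<alpha>) / (2 - (\<alpha> + \<beta>))" using assms(5,6) by simp
  moreover have "alg N i f (loc N i s) s (v i) = No"
    using assms(7) by (intro complete_answer_No[OF assms(3)]) simp
  ultimately show ?thesis unfolding Ev_upper_def using bound by (simp add: w_upper_le)
qed

lemma Ev_upper_eq_0:
  assumes "wf_pak N" and "noX f" and "complete_for N i f" and "reliable_for N i 1 \<beta> f"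
    and "sat N s v (Conj (Neg (Xa i f)) (Neg (Kn i f)))"
  shows "Ev_upper N i f s v = 0"
proof -
  have "x = 0" if "x \<in> Wset (Fam N i f (loc N i s)) No True" for x
    using that
  proof (rule Wset_True_eq_0)
    show "a No = 0" if "a \<in> Fam N i f (loc N i s) True" for a
      using Fam_nonneg[OF that, of No] Fam_No_eq[OF assms(1,3) that] Fam_True_Yes_ge[OF assms(4) that]
      by simp
  qed
  moreover have "alg N i f (loc N i s) s (v i) = No"
    using assms(5) by (intro complete_answer_No[OF assms(3)]) simp
  ultimately show ?thesis unfolding Ev_upper_def by (simp add: w_upper_eq_0)
qed

theorem proposition5p3:
  fixes N :: "('s, 'p, 'ag, 'l, 'c) pak" and i :: 'ag and \<phi> :: "('p, 'ag) fml"
    and \<alpha> \<beta> :: real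
  assumes "wf_pak N"
    and "noX \<phi>"
    and "\<alpha> \<in> {0..1}" and "\<beta> \<in> {0..1}"
    and "complete_for N i \<phi>"
    and "reliable_for N i \<alpha> \<beta> \<phi>"
  shows
    "((\<alpha>, \<beta>) \<noteq> (0, 0) \<longrightarrow>
       (\<forall>s v. sat N s v (Conj (Xa i \<phi>) (Neg (Kn i (Neg \<phi>)))) \<longrightarrow>
              Ev_lower N i \<phi> s v \<ge> \<alpha> / (\<alpha> + \<beta>)))
   \<and> ((\<alpha>, \<beta>) = (0, 0) \<longrightarrow>
       (\<forall>s v. sat N s v (Conj (Xa i \<phi>) (Neg (Kn i (Neg \<phi>)))) \<longrightarrow>
              Ev_lower N i \<phi> s v = 1))
   \<and> ((\<alpha>, \<beta>) \<noteq> (1, 1) \<longrightarrow>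
       (\<forall>s v. sat N s v (Conj (Neg (Xa i \<phi>)) (Neg (Kn i \<phi>))) \<longrightarrow>
              Ev_upper N i \<phi> s v \<le> (1 - \<alpha>) / (2 - (\<alpha> + \<beta>))))
   \<and> ((\<alpha>, \<beta>) = (1, 1) \<longrightarrow>
       (\<forall>s v. sat N s v (Conj (Neg (Xa i \<phi>)) (Neg (Kn i \<phi>))) \<longrightarrow>
              Ev_upper N i \<phi> s v = 0))"
proof -
  have "0 \<le> \<alpha>" "\<alpha> \<le> 1" "0 \<le> \<beta>" "\<beta> \<le> 1" using assms(3,4) by auto
  note lower = Ev_lower_ge_ratio[OF assms(1,2,6) \<open>0 \<le> \<alpha>\<close> \<open>0 \<le> \<beta>\<close>]
  note upper = Ev_upper_le_ratio[OF assms(1,2,5,6) \<open>\<alpha> \<le> 1\<close> \<open>\<beta> \<le> 1\<close>]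
  have lower_exact: "Ev_lower N i \<phi> s v = 1"
    if "\<beta> = 0" "sat N s v (Conj (Xa i \<phi>) (Neg (Kn i (Neg \<phi>))))" for s v
    using Ev_lower_eq_1[OF assms(1,2)] assms(6) that by simp
  have upper_exact: "Ev_upper N i \<phi> s v = 0"
    if "\<alpha> = 1" "sat N s v (Conj (Neg (Xa i \<phi>)) (Neg (Kn i \<phi>)))" for s v
    using Ev_upper_eq_0[OF assms(1,2,5)] assms(6) that by simp
  show ?thesis using lower lower_exact upper upper_exact by simp
qed

end
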